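(* Fix $g\ge0$ and $n\ge0$. There is a bijection between Dyck paths of semilength $n$ and height at most $g+1$ and quadruples $(m,L,R,M)$ such that - $m$ is a non-negative integer, - $L=(L_1,\dots,L_m)$ is an $m$-tuple of Dyck paths of height at most $\lfloor g/2\rfloor$, - $R=(R_1,\dots,R_m)$ is an $m$-tuple of Dyck paths of height at most $\lceil g/2\rceil$, - $M$ is a Dyck path of height at most $\lceil g/2\rceil$ if $m=0$, and of height exactly $\lceil g/2\rceil$ otherwise, and the sum of the semilengths of the Dyck paths in $L$, $R$ and $M$ is $n-m$.
   Context: A Dyck path of semilength $k\ge0$ is a lattice path from $(0,0)$ to $(2k,0)$ with steps $(1,1)$ and $(1,-1)$ never going below the $x$-axis (the empty path is the Dyck path of semilength $0$). Its height is the maximal $y$-coordinate it attains. *)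

theory Defs
  imports Main
begin

text \<open>A lattice path with steps (1,1) and (1,-1) is encoded as a list of booleans:
  True = up step (1,1), False = down step (1,-1).\<close>

definition level :: "bool list \<Rightarrow> int" where
  "level p = int (length (filter id p)) - int (length (filter Not p))"

definition dyck_path :: "bool list \<Rightarrow> bool" where
  "dyck_path p \<longleftrightarrow> level p = 0 \<and> (\<forall>i \<le> length p. level (take i p) \<ge> 0)"

definition semilength :: "bool list \<Rightarrow> nat" where
  "semilength p = length p div 2"

definition height :: "bool list \<Rightarrow> nat" where
  "height p = nat (Max {level (take i p) | i. i \<le> length p})"

definition dyck_bounded :: "nat \<Rightarrow> nat \<Rightarrow> bool list set" where
  "dyck_bounded n h = {p. dyck_path p \<and> semilength p = n \<and> height p \<le> h}"

definition quadruples :: "nat \<Rightarrow> nat \<Rightarrow>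
    (nat \<times> bool list list \<times> bool list list \<times> bool list) set" where
  "quadruples g n = {(m, L, R, M).
      length L = m \<and> length R = m
    \<and> (\<forall>P \<in> set L. dyck_path P \<and> height P \<le> g div 2)
    \<and> (\<forall>P \<in> set R. dyck_path P \<and> height P \<le> (g + 1) div 2)
    \<and> dyck_path M
    \<and> (if m = 0 then height M \<le> (g + 1) div 2 else height M = (g + 1) div 2)
    \<and> (\<Sum>P\<leftarrow>L. semilength P) + (\<Sum>P\<leftarrow>R. semilength P) + semilength M + m = n}"

end

theory Submission
  imports Defs
begin

(* Let h = ceil(g/2), so that a strip of height g + 1 splits into the lower strip [0, h] and the
   upper strip [h + 1, g + 1] of height floor(g/2).  A path that never exceeds h is sent to
   (0, [], [], P).  Otherwise cut P at its first visit to height h.  The rest of P decomposes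
   uniquely into m >= 1 arches followed by a tail that stays in [0, h]: each arch is an excursion
   below h (the reflection of a path of R), an up step, an excursion in the upper strip (a path
   of L) and a down step back to h.  Gluing the initial piece to the tail gives M, which attains
   height h exactly; conversely the arches are re-inserted into M at its first visit to h. *)

lemma level_Nil [simp]: "level [] = 0"
  by (simp add: level_def)

lemma level_Cons [simp]: "level (x # p) = (if x then 1 else -1) + level p"
  by (simp add: level_def)

lemma level_append [simp]: "level (p @ q) = level p + level q"
  by (induction p) auto

lemma level_map_Not [simp]: "level (map Not p) = - level p"
  by (induction p) auto

lemma Not_comp_Not [simp]: "Not \<circ> Not = id"
  by auto

lemma length_eq_2_semilength:
  assumes "level p = 0"
  shows "length p = 2 * semilength p"
proof -
  have "length (filter id p) = length (filter Not p)"
    using assms by (simp add: level_def)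
  moreover have "length (filter id p) + length (filter (\<lambda>x. \<not> id x) p) = length p"
    by (rule sum_length_filter_compl)
  ultimately have "length p = 2 * length (filter Not p)"
    by simp
  then show ?thesis
    by (simp add: semilength_def)
qed

fun stays_within :: "int \<Rightarrow> int \<Rightarrow> int \<Rightarrow> bool list \<Rightarrow> bool" where
  "stays_within lo hi s [] \<longleftrightarrow> lo \<le> s \<and> s \<le> hi"
| "stays_within lo hi s (x # p) \<longleftrightarrow>
     lo \<le> s \<and> s \<le> hi \<and> stays_within lo hi (if x then s + 1 else s - 1) p"

lemma stays_within_start: "stays_within lo hi s p \<Longrightarrow> lo \<le> s \<and> s \<le> hi"
  by (cases p) auto

lemma stays_within_append [simp]:
  "stays_within lo hi s (a @ b) \<longleftrightarrow> stays_within lo hi s a \<and> stays_within lo hi (s + level a) b"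
  by (induction a arbitrary: s) (auto dest: stays_within_start simp: algebra_simps)

lemma stays_within_end: "stays_within lo hi s p \<Longrightarrow> lo \<le> s + level p \<and> s + level p \<le> hi"
  using stays_within_append [of lo hi s p "[]"] by simp

lemma stays_within_shift:
  "stays_within lo hi s p \<longleftrightarrow> stays_within (lo + c) (hi + c) (s + c) p"
  by (induction p arbitrary: s) (auto simp: algebra_simps)

lemma stays_within_map_Not:
  "stays_within lo hi s (map Not p) \<longleftrightarrow> stays_within (- hi) (- lo) (- s) p"
  by (induction p arbitrary: s) (auto simp: algebra_simps)

lemma stays_within_reflect: "stays_within 0 h h (map Not p) \<longleftrightarrow> stays_within 0 h 0 p"
  using stays_within_map_Not [of 0 h h p] stays_within_shift [of "- h" 0 "- h" p h] by simp

lemma stays_within_mono: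
  "stays_within lo hi s p \<Longrightarrow> lo' \<le> lo \<Longrightarrow> hi \<le> hi' \<Longrightarrow> stays_within lo' hi' s p"
  by (induction p arbitrary: s) auto

lemma stays_within_iff_take:
  "stays_within lo hi s p \<longleftrightarrow> (\<forall>i\<le>length p. lo \<le> s + level (take i p) \<and> s + level (take i p) \<le> hi)"
proof (induction p arbitrary: s)
  case (Cons x p)
  have "(\<forall>i\<le>length (x # p). Q i) \<longleftrightarrow> Q 0 \<and> (\<forall>i\<le>length p. Q (Suc i))" for Q
    by (metis Suc_le_mono length_Cons not0_implies_Suc zero_le)
  then show ?case
    using Cons.IH by (simp add: algebra_simps)
qed simp

definition dyck_in_strip :: "int \<Rightarrow> int \<Rightarrow> bool list \<Rightarrow> bool" where
  "dyck_in_strip lo hi p \<longleftrightarrow> level p = 0 \<and> stays_within lo hi lo p"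

definition reaches :: "int \<Rightarrow> bool list \<Rightarrow> bool" where
  "reaches c p \<longleftrightarrow> (\<exists>i\<le>length p. level (take i p) = c)"

lemma height_eq_nat_Max: "height p = nat (Max ((\<lambda>i. level (take i p)) ` {..length p}))"
proof -
  have "{level (take i p) | i. i \<le> length p} = (\<lambda>i. level (take i p)) ` {..length p}"
    by auto
  then show ?thesis
    by (simp add: height_def)
qed

lemma height_le_iff: "height p \<le> k \<longleftrightarrow> (\<forall>i\<le>length p. level (take i p) \<le> int k)"
  by (auto simp: height_eq_nat_Max nat_le_iff)

lemma height_eq_iff: "height p = k \<longleftrightarrow> height p \<le> k \<and> reaches (int k) p"
proof -
  let ?S = "(\<lambda>i. level (take i p)) ` {..length p}"
  have "0 \<in> ?S"
    by force
  then have "0 \<le> Max ?S"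
    by (simp add: Max_ge_iff)
  then have "height p = k \<longleftrightarrow> Max ?S = int k"
    by (auto simp: height_eq_nat_Max)
  also have "\<dots> \<longleftrightarrow> Max ?S \<le> int k \<and> int k \<in> ?S"
    by (metis Max_ge Max_in antisym_conv \<open>0 \<in> ?S\<close> empty_iff finite_atMost finite_imageI)
  finally show ?thesis
    by (force simp: height_eq_nat_Max nat_le_iff reaches_def)
qed

lemma dyck_path_height_le_iff: "dyck_path p \<and> height p \<le> k \<longleftrightarrow> dyck_in_strip 0 (int k) p"
  unfolding dyck_path_def height_le_iff dyck_in_strip_def stays_within_iff_take by auto

lemma dyck_in_strip_shift: "dyck_in_strip lo hi p \<longleftrightarrow> dyck_in_strip 0 (hi - lo) p"
  using stays_within_shift [of 0 "hi - lo" 0 p lo] by (simp add: dyck_in_strip_def)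

definition first_hit :: "int \<Rightarrow> bool list \<Rightarrow> nat" where
  "first_hit c p = (LEAST i. level (take i p) = c)"

lemma first_hit_le: "level (take i p) = c \<Longrightarrow> first_hit c p \<le> i"
  unfolding first_hit_def by (rule Least_le)

lemma first_hit_le_length: "reaches c p \<Longrightarrow> first_hit c p \<le> length p"
  unfolding reaches_def by (metis first_hit_le le_trans)

lemma level_take_first_hit: "reaches c p \<Longrightarrow> level (take (first_hit c p) p) = c"
  unfolding reaches_def first_hit_def by (metis (mono_tags) LeastI)

lemma reaches_append: "reaches c a \<Longrightarrow> reaches c (a @ q)"
  unfolding reaches_def by (metis le_add1 length_append order_trans take_append append_Nil2 diff_is_0_eq take0)

lemma first_hit_append: "reaches c a \<Longrightarrow> first_hit c (a @ q) = first_hit c a"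
proof -
  assume "reaches c a"
  let ?k = "first_hit c a"
  have k: "?k \<le> length a" "level (take ?k a) = c"
    using first_hit_le_length level_take_first_hit \<open>reaches c a\<close> by auto
  show ?thesis
    unfolding first_hit_def [of c "a @ q"]
  proof (rule Least_equality)
    show "level (take ?k (a @ q)) = c"
      using k by simp
  next
    fix i
    assume "level (take i (a @ q)) = c"
    then show "?k \<le> i"
      using k(1) first_hit_le [of i a c] by (cases "i \<le> length a") auto
  qed
qed

lemma reaches_take_first_hit: "reaches c p \<Longrightarrow> reaches c (take (first_hit c p) p)"
  using first_hit_le_length level_take_first_hit unfolding reaches_def
  by (metis order_refl length_take min_absorb2 take_take min.idem)

lemma first_hit_take_first_hit: "reaches c p \<Longrightarrow> first_hit c (take (first_hit c p) p) = first_hit c p"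
  using first_hit_append [OF reaches_take_first_hit, of c p "drop (first_hit c p) p"] by simp

lemma stays_within_split_first_hit:
  assumes "stays_within lo hi 0 p" "reaches c p"
  shows "stays_within lo hi 0 (take (first_hit c p) p)" "level (take (first_hit c p) p) = c"
    "stays_within lo hi c (drop (first_hit c p) p)"
  using assms stays_within_append [of lo hi 0 "take (first_hit c p) p" "drop (first_hit c p) p"]
    first_hit_le_length [OF assms(2)] level_take_first_hit [OF assms(2)] by auto

lemma exit_through_top:
  "stays_within lo hi s p \<Longrightarrow> \<not> stays_within lo c s p \<Longrightarrow> s \<le> c \<Longrightarrow>
    \<exists>a q. p = a @ True # q \<and> stays_within lo c s a \<and> s + level a = c"
proof (induction p arbitrary: s)
  case (Cons x p)
  show ?case
  proof (cases "x \<and> s = c")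
    case True
    then show ?thesis
      using Cons.prems by force
  next
    case False
    let ?s = "if x then s + 1 else s - 1"
    have "stays_within lo hi ?s p" "\<not> stays_within lo c ?s p" "?s \<le> c"
      using Cons.prems False by auto
    then obtain a q where "p = a @ True # q" "stays_within lo c ?s a" "?s + level a = c"
      using Cons.IH by blast
    with Cons.prems have "x # p = (x # a) @ True # q" "stays_within lo c s (x # a)" "s + level (x # a) = c"
      by (auto simp: algebra_simps)
    then show ?thesis
      by blast
  qed
qed simp

lemma exit_through_top_first_hit:
  assumes "stays_within lo hi 0 p" "\<not> stays_within lo c 0 p" "0 \<le> c"
  shows "reaches c p" "stays_within lo c 0 (take (first_hit c p) p)"
proof -
  obtain a q where a: "p = a @ True # q" "stays_within lo c 0 a" "level a = c"
    using exit_through_top [OF assms] by auto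
  have "reaches c a"
    using a(3) unfolding reaches_def by (metis order_refl take_all)
  then show "reaches c p"
    using reaches_append a(1) by blast
  have "first_hit c p = first_hit c a" "first_hit c a \<le> length a"
    using first_hit_append [OF \<open>reaches c a\<close>] first_hit_le_length [OF \<open>reaches c a\<close>] a(1) by simp_all
  then show "stays_within lo c 0 (take (first_hit c p) p)"
    using stays_within_split_first_hit(1) [OF a(2) \<open>reaches c a\<close>] a(1) by simp
qed

lemma exit_through_bottom:
  assumes "stays_within lo hi s p" "\<not> stays_within c hi s p" "c \<le> s"
  shows "\<exists>a q. p = a @ False # q \<and> stays_within c hi s a \<and> s + level a = c"
proof -
  obtain a q where a: "map Not p = a @ True # q" "stays_within (- hi) (- c) (- s) a" "- s + level a = - c"
    using exit_through_top [of "- hi" "- lo" "- s" "map Not p" "- c"] assms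
    by (auto simp: stays_within_map_Not)
  from arg_cong [OF a(1), of "map Not"] have "p = map Not a @ False # map Not q"
    by simp
  moreover have "stays_within c hi s (map Not a)" "s + level (map Not a) = c"
    using a by (auto simp: stays_within_map_Not)
  ultimately show ?thesis
    by blast
qed

lemma first_exit_unique:
  assumes "a @ x # q = a' @ x # q'"
    and "stays_within lo hi s a" "\<not> stays_within lo hi s (a @ [x])"
    and "stays_within lo hi s a'" "\<not> stays_within lo hi s (a' @ [x])"
  shows "a = a'"
proof (rule ccontr)
  assume "a \<noteq> a'"
  from assms(1) obtain us where
    "a = a' @ us \<and> us @ x # q = x # q' \<or> a @ us = a' \<and> x # q = us @ x # q'"
    using append_eq_append_conv2 by metis
  with \<open>a \<noteq> a'\<close> have "a = a' @ x # tl us \<or> a' = a @ x # tl us"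
    by (cases us) auto
  then show False
    using assms(2-5) by (auto dest: stays_within_start)
qed

fun arches :: "bool list list \<Rightarrow> bool list list \<Rightarrow> bool list" where
  "arches (b # L) (r # R) = map Not r @ True # b @ False # arches L R"
| "arches _ _ = []"

definition arch_lists :: "int \<Rightarrow> int \<Rightarrow> bool list list \<Rightarrow> bool list list \<Rightarrow> bool" where
  "arch_lists h t L R \<longleftrightarrow> length L = length R
     \<and> (\<forall>b\<in>set L. dyck_in_strip (h + 1) t b) \<and> (\<forall>r\<in>set R. dyck_in_strip 0 h r)"

lemma arch_lists_level: "arch_lists h t L R \<Longrightarrow> \<forall>p \<in> set L \<union> set R. level p = 0"
  by (auto simp: arch_lists_def dyck_in_strip_def)

lemma level_arches: "\<forall>p \<in> set L \<union> set R. level p = 0 \<Longrightarrow> level (arches L R) = 0"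
  by (induction L R rule: arches.induct) auto

lemma length_arches:
  "length L = length R \<Longrightarrow> \<forall>p \<in> set L \<union> set R. level p = 0 \<Longrightarrow>
    length (arches L R) = 2 * ((\<Sum>p\<leftarrow>L. semilength p) + (\<Sum>p\<leftarrow>R. semilength p) + length L)"
  by (induction L R rule: arches.induct) (auto simp: length_eq_2_semilength)

lemma stays_within_arches:
  "arch_lists h t L R \<Longrightarrow> 0 \<le> h \<Longrightarrow> h < t \<Longrightarrow> stays_within 0 t h (arches L R)"
proof (induction L R rule: arches.induct)
  case (1 b L r R)
  then have "arch_lists h t L R" and b: "dyck_in_strip (h + 1) t b" and r: "dyck_in_strip 0 h r"
    by (auto simp: arch_lists_def)
  moreover have "stays_within 0 t h (map Not r)"
    using r stays_within_reflect stays_within_mono [of 0 h h "map Not r" 0 t] 1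
    by (simp add: dyck_in_strip_def)
  moreover have "stays_within 0 t (h + 1) b"
    using b stays_within_mono [of "h + 1" t "h + 1" b 0 t] 1
    by (simp add: dyck_in_strip_def)
  ultimately show ?case
    using 1 by (simp add: dyck_in_strip_def)
qed simp_all

lemma arches_leave_lower_strip:
  assumes "L \<noteq> []" "length L = length R" "\<forall>r\<in>set R. level r = 0"
  shows "\<not> stays_within lo h h (arches L R @ q)"
proof -
  obtain b L' r R' where "L = b # L'" "R = r # R'"
    using assms(1,2) by (cases L; cases R) auto
  with assms(3) show ?thesis
    by (auto dest: stays_within_start)
qed

lemma arches_decomposition:
  "stays_within 0 t h Y \<Longrightarrow> level Y \<le> 0 \<Longrightarrow>
    \<exists>L R b. Y = arches L R @ b \<and> arch_lists h t L R \<and> stays_within 0 h h b"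
proof (induction "length Y" arbitrary: Y rule: less_induct)
  case less
  show ?case
  proof (cases "stays_within 0 h h Y")
    case True
    then have "Y = arches [] [] @ Y" "arch_lists h t [] []"
      by (simp_all add: arch_lists_def)
    with True show ?thesis
      by blast
  next
    case False
    then obtain W Y1 where W: "Y = W @ True # Y1" "stays_within 0 h h W" "level W = 0"
      using exit_through_top [OF less.prems(1) False] by auto
    then have Y1: "stays_within 0 t (h + 1) Y1" "level Y1 < 0"
      using less.prems by auto
    then have "\<not> stays_within (h + 1) t (h + 1) Y1"
      using stays_within_end by fastforce
    with Y1 obtain B Y2 where B: "Y1 = B @ False # Y2" "stays_within (h + 1) t (h + 1) B" "level B = 0"
      using exit_through_bottom by fastforce
    then have "stays_within 0 t h Y2" "level Y2 \<le> 0" "length Y2 < length Y"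
      using W Y1 less.prems by auto
    then obtain L R b where "Y2 = arches L R @ b" "arch_lists h t L R" "stays_within 0 h h b"
      using less.hyps by blast
    moreover have "Y = arches (B # L) (map Not W # R) @ b"
      using W B \<open>Y2 = arches L R @ b\<close> by simp
    moreover have "arch_lists h t (B # L) (map Not W # R)"
      using W B \<open>arch_lists h t L R\<close> stays_within_reflect [of h "map Not W"]
      by (auto simp: arch_lists_def dyck_in_strip_def)
    ultimately show ?thesis
      by blast
  qed
qed

lemma arches_decomposition_unique:
  "arches L R @ b = arches L' R' @ b' \<Longrightarrow> arch_lists h t L R \<Longrightarrow> arch_lists h t L' R' \<Longrightarrow>
    stays_within 0 h h b \<Longrightarrow> stays_within 0 h h b' \<Longrightarrow> L = L' \<and> R = R' \<and> b = b'"
proof (induction L arbitrary: R L' R')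
  case Nil
  have "L' = []"
    using Nil.prems arches_leave_lower_strip [of L' R' 0 h b']
    by (auto simp: arch_lists_def dyck_in_strip_def)
  with Nil.prems show ?case
    by (simp add: arch_lists_def)
next
  case (Cons c L)
  show ?case
  proof (cases L')
    case Nil
    then show ?thesis
      using Cons.prems arches_leave_lower_strip [of "c # L" R 0 h b]
      by (auto simp: arch_lists_def dyck_in_strip_def)
  next
    case (Cons c' L1)
    obtain r R1 r' R1' where R: "R = r # R1" "R' = r' # R1'"
      using Cons.prems(2,3) \<open>L' = c' # L1\<close> by (cases R; cases R') (auto simp: arch_lists_def)
    have lists: "arch_lists h t L R1" "arch_lists h t L1 R1'"
      and c: "dyck_in_strip (h + 1) t c" "dyck_in_strip (h + 1) t c'"
      and r: "dyck_in_strip 0 h r" "dyck_in_strip 0 h r'"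
      using Cons.prems(2,3) \<open>L' = c' # L1\<close> R by (auto simp: arch_lists_def)
    have eq: "map Not r @ True # c @ False # arches L R1 @ b
        = map Not r' @ True # c' @ False # arches L1 R1' @ b'"
      using Cons.prems(1) \<open>L' = c' # L1\<close> R by simp
    have "map Not r = map Not r'"
      using first_exit_unique [OF eq, of 0 h h] r stays_within_reflect
      by (auto simp: dyck_in_strip_def)
    then have "r = r'"
      by (metis Not_comp_Not list.map_comp list.map_id)
    with eq have eq': "c @ False # arches L R1 @ b = c' @ False # arches L1 R1' @ b'"
      by simp
    then have "c = c'"
      using first_exit_unique [OF eq', of "h + 1" t "h + 1"] c by (auto simp: dyck_in_strip_def)
    with eq' have "arches L R1 @ b = arches L1 R1' @ b'"
      by simp
    then show ?thesis
      using Cons.IH lists Cons.prems(4,5) \<open>L' = c' # L1\<close> R \<open>r = r'\<close> \<open>c = c'\<close> by blast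
  qed
qed

(* When M never reaches h, first_hit h M is a junk value; this is harmless since then L = R = []
   and insert_arches h [] [] M = M. *)

definition insert_arches :: "int \<Rightarrow> bool list list \<Rightarrow> bool list list \<Rightarrow> bool list \<Rightarrow> bool list" where
  "insert_arches h L R M = take (first_hit h M) M @ arches L R @ drop (first_hit h M) M"

lemma insert_arches_Nil [simp]: "insert_arches h [] [] M = M"
  by (simp add: insert_arches_def)

lemma insert_arches_first_hit:
  assumes "reaches h M"
  shows "first_hit h (insert_arches h L R M) = first_hit h M"
    "take (first_hit h M) (insert_arches h L R M) = take (first_hit h M) M"
    "drop (first_hit h M) (insert_arches h L R M) = arches L R @ drop (first_hit h M) M"
  using reaches_take_first_hit [OF assms] first_hit_take_first_hit [OF assms]
    first_hit_append [of h "take (first_hit h M) M"] first_hit_le_length [OF assms]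
  by (auto simp: insert_arches_def)

lemma insert_arches_inject:
  assumes "insert_arches h L R M = insert_arches h L' R' M'"
    and "arch_lists h t L R" "arch_lists h t L' R'"
    and "dyck_in_strip 0 h M" "reaches h M" "dyck_in_strip 0 h M'" "reaches h M'"
  shows "L = L' \<and> R = R' \<and> M = M'"
proof -
  define k where "k = first_hit h M"
  have k': "first_hit h M' = k"
    using insert_arches_first_hit(1) [OF assms(5), of L R] insert_arches_first_hit(1) [OF assms(7), of L' R']
      assms(1) by (simp add: k_def)
  have "arches L R @ drop k M = arches L' R' @ drop k M'"
    using insert_arches_first_hit(3) [OF assms(5), of L R] insert_arches_first_hit(3) [OF assms(7), of L' R']
      assms(1) k' by (simp add: k_def)
  moreover have "stays_within 0 h h (drop k M)" "stays_within 0 h h (drop k M')"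
    using stays_within_split_first_hit(3) [of 0 h M h] stays_within_split_first_hit(3) [of 0 h M' h]
      assms(4-7) k' by (auto simp: k_def dyck_in_strip_def)
  ultimately have "L = L' \<and> R = R' \<and> drop k M = drop k M'"
    using arches_decomposition_unique assms(2,3) by blast
  moreover have "take k M = take k M'"
    using insert_arches_first_hit(2) [OF assms(5), of L R] insert_arches_first_hit(2) [OF assms(7), of L' R']
      assms(1) k' by (simp add: k_def)
  ultimately show ?thesis
    by (metis append_take_drop_id)
qed

lemma strip_path_decomposition:
  assumes "stays_within 0 t 0 P" "level P = 0" "\<not> stays_within 0 h 0 P" "0 \<le> h"
  obtains L R M where "P = insert_arches h L R M" "arch_lists h t L R" "dyck_in_strip 0 h M"
    "reaches h M" "length P = length M + length (arches L R)"
proof -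
  define k where "k = first_hit h P"
  have "reaches h P" "stays_within 0 h 0 (take k P)"
    using exit_through_top_first_hit [OF assms(1,3,4)] by (simp_all add: k_def)
  have "level (take k P) = h" "stays_within 0 t h (drop k P)"
    using stays_within_split_first_hit [OF assms(1) \<open>reaches h P\<close>] by (simp_all add: k_def)
  then have "level (drop k P) = - h"
    using assms(2) level_append [of "take k P" "drop k P"] by simp
  obtain L R b where Y: "drop k P = arches L R @ b" "arch_lists h t L R" "stays_within 0 h h b"
    using arches_decomposition [of t h "drop k P"] \<open>stays_within 0 t h (drop k P)\<close>
      \<open>level (drop k P) = - h\<close> assms(4) by auto
  define M where "M = take k P @ b"
  have "reaches h (take k P)" "first_hit h (take k P) = k"
    using reaches_take_first_hit first_hit_take_first_hit \<open>reaches h P\<close> by (simp_all add: k_def)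
  then have "reaches h M" "first_hit h M = k"
    using reaches_append first_hit_append by (simp_all add: M_def)
  moreover have "length (take k P) = k"
    using first_hit_le_length [OF \<open>reaches h P\<close>] by (simp add: k_def)
  ultimately have "take (first_hit h M) M = take k P" "drop (first_hit h M) M = b"
    by (simp_all add: M_def)
  moreover have P_split: "P = take k P @ arches L R @ b"
    using Y(1) append_take_drop_id [of k P] by simp
  ultimately have "P = insert_arches h L R M"
    by (simp add: insert_arches_def)
  moreover have "dyck_in_strip 0 h M"
    using level_arches [OF arch_lists_level [OF Y(2)]] \<open>stays_within 0 h 0 (take k P)\<close>
      \<open>level (take k P) = h\<close> Y \<open>level (drop k P) = - h\<close>
    by (simp add: M_def dyck_in_strip_def)
  moreover have "length P = length M + length (arches L R)"
    using arg_cong [OF P_split, of length] by (simp add: M_def)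
  ultimately show ?thesis
    using that Y(2) \<open>reaches h M\<close> by blast
qed

definition strip_paths :: "int \<Rightarrow> nat \<Rightarrow> bool list set" where
  "strip_paths t n = {P. dyck_in_strip 0 t P \<and> semilength P = n}"

definition arch_quadruples ::
    "int \<Rightarrow> int \<Rightarrow> nat \<Rightarrow> (nat \<times> bool list list \<times> bool list list \<times> bool list) set" where
  "arch_quadruples h t n = {(m, L, R, M).
      length L = m \<and> arch_lists h t L R \<and> dyck_in_strip 0 h M \<and> (m \<noteq> 0 \<longrightarrow> reaches h M)
    \<and> (\<Sum>P\<leftarrow>L. semilength P) + (\<Sum>P\<leftarrow>R. semilength P) + semilength M + m = n}"

lemma insert_arches_in_strip_paths:
  assumes "(m, L, R, M) \<in> arch_quadruples h t n" "0 \<le> h" "h < t"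
  shows "insert_arches h L R M \<in> strip_paths t n"
proof (cases "m = 0")
  case True
  with assms show ?thesis
    by (auto simp: arch_quadruples_def arch_lists_def strip_paths_def dyck_in_strip_def
        intro: stays_within_mono)
next
  case False
  let ?k = "first_hit h M"
  have LR: "arch_lists h t L R" and M: "dyck_in_strip 0 h M" "reaches h M"
    and n: "(\<Sum>P\<leftarrow>L. semilength P) + (\<Sum>P\<leftarrow>R. semilength P) + semilength M + length L = n"
    using assms(1) False by (auto simp: arch_quadruples_def)
  have "stays_within 0 t 0 (take ?k M)" "level (take ?k M) = h" "stays_within 0 t h (drop ?k M)"
    using stays_within_split_first_hit [of 0 h M h] M assms(3) stays_within_mono
    by (auto simp: dyck_in_strip_def)
  moreover have "level (drop ?k M) = - h"
    using M(1) \<open>level (take ?k M) = h\<close> level_append [of "take ?k M" "drop ?k M"]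
    by (simp add: dyck_in_strip_def)
  moreover have "stays_within 0 t h (arches L R)" "level (arches L R) = 0"
    using stays_within_arches [OF LR assms(2,3)] level_arches [OF arch_lists_level [OF LR]] by auto
  ultimately have "dyck_in_strip 0 t (insert_arches h L R M)"
    using M by (simp add: insert_arches_def dyck_in_strip_def)
  moreover have "length (insert_arches h L R M) = length M + length (arches L R)"
    by (simp add: insert_arches_def)
  then have "length (insert_arches h L R M) = 2 * n"
    using length_arches [OF _ arch_lists_level [OF LR]] LR length_eq_2_semilength M(1) n
    by (simp add: arch_lists_def dyck_in_strip_def)
  ultimately show ?thesis
    by (simp add: strip_paths_def semilength_def)
qed

lemma stays_within_insert_arches_iff:
  assumes "(m, L, R, M) \<in> arch_quadruples h t n"
  shows "stays_within 0 h 0 (insert_arches h L R M) \<longleftrightarrow> m = 0"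
proof (cases "m = 0")
  case True
  then show ?thesis
    using assms by (auto simp: arch_quadruples_def arch_lists_def dyck_in_strip_def)
next
  case False
  then have "L \<noteq> []" "arch_lists h t L R" "level (take (first_hit h M) M) = h"
    using assms level_take_first_hit [of h M] by (auto simp: arch_quadruples_def)
  with False show ?thesis
    using arches_leave_lower_strip [of L R 0 h "drop (first_hit h M) M"] arch_lists_level
    by (auto simp: insert_arches_def arch_lists_def)
qed

lemma inj_on_insert_arches: "inj_on (\<lambda>(m, L, R, M). insert_arches h L R M) (arch_quadruples h t n)"
proof (rule inj_onI)
  fix x x'
  assume "x \<in> arch_quadruples h t n" "x' \<in> arch_quadruples h t n"
    and "(\<lambda>(m, L, R, M). insert_arches h L R M) x = (\<lambda>(m, L, R, M). insert_arches h L R M) x'"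
  moreover obtain m L R M m' L' R' M' where x: "x = (m, L, R, M)" "x' = (m', L', R', M')"
    by (metis prod_cases4)
  ultimately have q: "(m, L, R, M) \<in> arch_quadruples h t n"
    and q': "(m', L', R', M') \<in> arch_quadruples h t n"
    and eq: "insert_arches h L R M = insert_arches h L' R' M'"
    by simp_all
  have "m = 0 \<longleftrightarrow> m' = 0"
    using stays_within_insert_arches_iff [OF q] stays_within_insert_arches_iff [OF q'] eq by simp
  have "L = L' \<and> R = R' \<and> M = M'"
  proof (cases "m = 0")
    case True
    with q q' \<open>m = 0 \<longleftrightarrow> m' = 0\<close> have "L = [] \<and> R = [] \<and> L' = [] \<and> R' = []"
      by (auto simp: arch_quadruples_def arch_lists_def)
    with eq show ?thesis
      by simp
  next
    case False
    with q q' \<open>m = 0 \<longleftrightarrow> m' = 0\<close> show ?thesis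
      using insert_arches_inject [OF eq, of t] by (auto simp: arch_quadruples_def)
  qed
  with q q' x show "x = x'"
    by (simp add: arch_quadruples_def)
qed

lemma strip_paths_subset_image:
  assumes "0 \<le> h"
  shows "strip_paths t n \<subseteq> (\<lambda>(m, L, R, M). insert_arches h L R M) ` arch_quadruples h t n"
proof
  fix P
  assume "P \<in> strip_paths t n"
  then have P: "level P = 0" "stays_within 0 t 0 P" "semilength P = n"
    by (auto simp: strip_paths_def dyck_in_strip_def)
  show "P \<in> (\<lambda>(m, L, R, M). insert_arches h L R M) ` arch_quadruples h t n"
  proof (cases "stays_within 0 h 0 P")
    case True
    then have "(0, [], [], P) \<in> arch_quadruples h t n"
      using P by (simp add: arch_quadruples_def arch_lists_def dyck_in_strip_def)
    then show ?thesis
      by (rule rev_image_eqI) simp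
  next
    case False
    then obtain L R M where LRM: "P = insert_arches h L R M" "arch_lists h t L R"
      "dyck_in_strip 0 h M" "reaches h M" and len: "length P = length M + length (arches L R)"
      using strip_path_decomposition [OF P(2,1) False assms] by blast
    have "length M = 2 * semilength M"
      using LRM(3) length_eq_2_semilength by (simp add: dyck_in_strip_def)
    moreover have "length (arches L R)
        = 2 * ((\<Sum>p\<leftarrow>L. semilength p) + (\<Sum>p\<leftarrow>R. semilength p) + length L)"
      using length_arches arch_lists_level [OF LRM(2)] LRM(2) by (simp add: arch_lists_def)
    moreover have "length P = 2 * n"
      using length_eq_2_semilength [OF P(1)] P(3) by simp
    ultimately have "(length L, L, R, M) \<in> arch_quadruples h t n"
      using LRM len by (simp add: arch_quadruples_def)
    then show ?thesis
      by (rule rev_image_eqI) (simp add: LRM(1))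
  qed
qed

lemma bij_betw_insert_arches:
  assumes "0 \<le> h" "h < t"
  shows "bij_betw (\<lambda>(m, L, R, M). insert_arches h L R M) (arch_quadruples h t n) (strip_paths t n)"
proof (rule bij_betw_imageI)
  show "inj_on (\<lambda>(m, L, R, M). insert_arches h L R M) (arch_quadruples h t n)"
    by (rule inj_on_insert_arches)
  show "(\<lambda>(m, L, R, M). insert_arches h L R M) ` arch_quadruples h t n = strip_paths t n"
    using insert_arches_in_strip_paths [OF _ assms] strip_paths_subset_image [OF assms(1), of t n]
    by auto
qed

lemma dyck_bounded_eq_strip_paths: "dyck_bounded n k = strip_paths (int k) n"
  unfolding dyck_bounded_def strip_paths_def using dyck_path_height_le_iff by blast

lemma quadruples_eq_arch_quadruples:
  "quadruples g n = arch_quadruples (int ((g + 1) div 2)) (int (g + 1)) n"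
proof -
  let ?h = "int ((g + 1) div 2)"
  have "int (g + 1) - (?h + 1) = int (g div 2)"
    by presburger
  then have upper: "dyck_path P \<and> height P \<le> g div 2 \<longleftrightarrow> dyck_in_strip (?h + 1) (int (g + 1)) P" for P
    using dyck_in_strip_shift [of "?h + 1" "int (g + 1)" P] dyck_path_height_le_iff by simp
  have middle: "dyck_path M \<and> (if m = 0 then height M \<le> k else height M = k) \<and> S
      \<longleftrightarrow> dyck_in_strip 0 (int k) M \<and> (m \<noteq> 0 \<longrightarrow> reaches (int k) M) \<and> S" for m :: nat and M k S
    using height_eq_iff [of M k] dyck_path_height_le_iff [of M k] by auto
  have "(m, L, R, M) \<in> quadruples g n \<longleftrightarrow> (m, L, R, M) \<in> arch_quadruples ?h (int (g + 1)) n" for m L R M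
    unfolding quadruples_def arch_quadruples_def arch_lists_def mem_Collect_eq prod.case
    by (simp only: upper dyck_path_height_le_iff [of _ "(g + 1) div 2"] middle) auto
  then show ?thesis
    by (intro set_eqI) (metis prod_cases4)
qed

theorem lemma3p11:
  fixes g n :: nat
  shows "\<exists>f. bij_betw f (dyck_bounded n (g + 1)) (quadruples g n)"
proof -
  have "bij_betw (\<lambda>(m, L, R, M). insert_arches (int ((g + 1) div 2)) L R M)
      (quadruples g n) (dyck_bounded n (g + 1))"
    using bij_betw_insert_arches [of "int ((g + 1) div 2)" "int (g + 1)" n]
    by (simp add: quadruples_eq_arch_quadruples dyck_bounded_eq_strip_paths)
  then show ?thesis
    using bij_betw_inv_into by blast
qed

end
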